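(* For $k\in\mathbb Z_{>0}$, $0\le l\le k$ and $N\ge1$, the number $p(k,l,N)$ of $ehf$-monomials of length $N$ equals $d^{(N)}_{k,l}(0)$.
   Context: An ordered monomial is a formal product $f_{n-1}^{a_{n-1}}h_{n-1}^{b_{n-1}}e_{n-1}^{c_{n-1}}\cdots e_2^{c_2}f_1^{a_1}h_1^{b_1}e_1^{c_1}f_0^{a_0}$ determined by its nonnegative integer exponents (set $a_i=b_i=c_i=0$ for $i\ge n$); it is an $ehf$-monomial (for given $k,l$) if (i) $a_i+a_{i+1}+b_{i+1}\le k$ for $i\ge0$; (ii) $a_i+b_{i+1}+c_{i+1}\le k$ for $i\ge0$; (iii) $a_i+b_i+c_{i+1}\le k$ for $i>0$; (iv) $b_i+c_i+c_{i+1}\le k$ for $i>0$; (v) $a_0\le l$, $c_1\le k-l$; it has length $N$ if $a_i=b_i=c_i=0$ for $i\ge N$. The level $k$ Verlinde algebra has basis $\pi_0,\dots,\pi_k$ with $\pi_l\pi_{l'}=\sum_i\pi_i$, sum over $|l-l'|\le i\le\min(2k-l-l',l+l')$, $i+l-l'$ even; $d^{(N)}_{k,l}(0)$ is defined by $(\pi_0+2\pi_1+\cdots+(k+1)\pi_k)^N=\sum_ld^{(N)}_{k,l}(0)\pi_l$. *)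

theory Defs
  imports Main
begin

text \<open>A monomial is given by exponent
  sequences a, b, c :: nat \<Rightarrow> nat (a_i for i \<ge> 0, b_i and c_i for i \<ge> 1;
  b_0 and c_0 do not occur and are fixed to 0).\<close>

definition is_ehf_monomial :: "nat \<Rightarrow> nat \<Rightarrow> (nat \<Rightarrow> nat) \<Rightarrow> (nat \<Rightarrow> nat) \<Rightarrow> (nat \<Rightarrow> nat) \<Rightarrow> bool" where
  "is_ehf_monomial k l a b c \<longleftrightarrow>
     b 0 = 0 \<and> c 0 = 0 \<and>
     (\<forall>i. a i + a (i+1) + b (i+1) \<le> k) \<and>
     (\<forall>i. a i + b (i+1) + c (i+1) \<le> k) \<and>
     (\<forall>i>0. a i + b i + c (i+1) \<le> k) \<and>
     (\<forall>i>0. b i + c i + c (i+1) \<le> k) \<and>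
     a 0 \<le> l \<and> c 1 \<le> k - l"

definition ehf_monomials :: "nat \<Rightarrow> nat \<Rightarrow> nat \<Rightarrow> ((nat \<Rightarrow> nat) \<times> (nat \<Rightarrow> nat) \<times> (nat \<Rightarrow> nat)) set" where
  "ehf_monomials k l N = {(a, b, c). is_ehf_monomial k l a b c \<and>
       (\<forall>i\<ge>N. a i = 0 \<and> b i = 0 \<and> c i = 0)}"

definition p_count :: "nat \<Rightarrow> nat \<Rightarrow> nat \<Rightarrow> nat" where
  "p_count k l N = card (ehf_monomials k l N)"

text \<open>Level k Verlinde algebra: elements are coefficient vectors v :: nat \<Rightarrow> int,
  v i being the coefficient of \<pi>_i (only i \<le> k matter).\<close>

definition verlinde_coeff :: "nat \<Rightarrow> nat \<Rightarrow> nat \<Rightarrow> nat \<Rightarrow> int" where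
  "verlinde_coeff k l l' i =
     (if \<bar>int l - int l'\<bar> \<le> int i \<and> int i \<le> min (2 * int k - int l - int l') (int l + int l')
         \<and> even (int i + int l - int l') then 1 else 0)"

definition verlinde_mult :: "nat \<Rightarrow> (nat \<Rightarrow> int) \<Rightarrow> (nat \<Rightarrow> int) \<Rightarrow> (nat \<Rightarrow> int)" where
  "verlinde_mult k x y = (\<lambda>i. if i \<le> k then
      (\<Sum>l\<le>k. \<Sum>l'\<le>k. x l * y l' * verlinde_coeff k l l' i) else 0)"

definition verlinde_basis :: "nat \<Rightarrow> nat \<Rightarrow> (nat \<Rightarrow> int)" where
  "verlinde_basis k j = (\<lambda>i. if i = j then 1 else 0)"

primrec verlinde_pow :: "nat \<Rightarrow> (nat \<Rightarrow> int) \<Rightarrow> nat \<Rightarrow> (nat \<Rightarrow> int)" where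
  "verlinde_pow k x 0 = verlinde_basis k 0"
| "verlinde_pow k x (Suc n) = verlinde_mult k (verlinde_pow k x n) x"

definition verlinde_X :: "nat \<Rightarrow> (nat \<Rightarrow> int)" where
  "verlinde_X k = (\<lambda>i. if i \<le> k then int i + 1 else 0)"

definition d_coeff :: "nat \<Rightarrow> nat \<Rightarrow> nat \<Rightarrow> int" where
  "d_coeff N k l = verlinde_pow k (verlinde_X k) N l"

end

theory Submission
  imports Defs
begin

(* Both sides satisfy the same linear recursion in N with the same value at N = 1.
   Deleting the first column (a_0, c_1, b_1) of an ehf-monomial of length N + 1 leaves a
   monomial of length N satisfying (i)-(iv), and this monomial satisfies (v) at level m
   exactly when a_1 <= m <= k - c_2. For fixed a_0 and c_1 the admissible values of b_1 are
   equinumerous with the levels m with max a_1 c_1 <= m <= k - max a_0 c_2; summing over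
   a_0 <= l and c_1 <= k - l gives
     p(k, l, N + 1) = sum over m of p(k, m, N) * (min (k - l) m + 1) * (min l (k - m) + 1).
   On the Verlinde side the coefficient of pi_l in pi_m * (pi_0 + 2 pi_1 + ... + (k+1) pi_k)
   is a sum of an arithmetic progression with step 2, and it equals the same product. *)

type_synonym ehf_exponents = "(nat \<Rightarrow> nat) \<times> (nat \<Rightarrow> nat) \<times> (nat \<Rightarrow> nat)"

definition is_free_ehf_monomial :: "nat \<Rightarrow> (nat \<Rightarrow> nat) \<Rightarrow> (nat \<Rightarrow> nat) \<Rightarrow> (nat \<Rightarrow> nat) \<Rightarrow> bool" where
  "is_free_ehf_monomial k a b c \<longleftrightarrow> b 0 = 0 \<and> c 0 = 0 \<and>
     (\<forall>i. a i + a (Suc i) + b (Suc i) \<le> k \<and> a i + b (Suc i) + c (Suc i) \<le> k \<and>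
          a (Suc i) + b (Suc i) + c (Suc (Suc i)) \<le> k \<and> b (Suc i) + c (Suc i) + c (Suc (Suc i)) \<le> k)"

lemma is_ehf_monomial_iff_free:
  "is_ehf_monomial k l a b c \<longleftrightarrow> is_free_ehf_monomial k a b c \<and> a 0 \<le> l \<and> c 1 \<le> k - l"
  unfolding is_ehf_monomial_def is_free_ehf_monomial_def
  by (metis Suc_eq_plus1 gr0_implies_Suc zero_less_Suc)

lemma all_nat_split: "(\<forall>i. P i) \<longleftrightarrow> P 0 \<and> (\<forall>i. P (Suc i))"
  by (metis not0_implies_Suc)

lemma is_free_ehf_monomial_cons:
  assumes "b 0 = 0" "c 0 = 0"
  shows "is_free_ehf_monomial k (case_nat x a) (case_nat 0 (b(0 := \<beta>))) (case_nat 0 (c(0 := y)))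
    \<longleftrightarrow> is_free_ehf_monomial k a b c \<and>
        x + a 0 + \<beta> \<le> k \<and> x + \<beta> + y \<le> k \<and> a 0 + \<beta> + c 1 \<le> k \<and> \<beta> + y + c 1 \<le> k"
  using assms unfolding is_free_ehf_monomial_def
  by (subst all_nat_split) auto

definition free_ehf_monomials :: "nat \<Rightarrow> nat \<Rightarrow> ehf_exponents set" where
  "free_ehf_monomials k N =
     {(a, b, c). is_free_ehf_monomial k a b c \<and> (\<forall>i\<ge>N. a i = 0 \<and> b i = 0 \<and> c i = 0)}"

lemma ehf_monomials_eq_free:
  "ehf_monomials k l N = free_ehf_monomials k N \<inter> {(a, b, c). a 0 \<le> l \<and> c 1 \<le> k - l}"
  by (auto simp: ehf_monomials_def free_ehf_monomials_def is_ehf_monomial_iff_free)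

lemma is_free_ehf_monomial_le:
  assumes "is_free_ehf_monomial k a b c"
  shows "a i \<le> k \<and> b i \<le> k \<and> c i \<le> k"
proof -
  have le: "a j + a (Suc j) + b (Suc j) \<le> k" "a j + b (Suc j) + c (Suc j) \<le> k" for j
    using assms by (auto simp: is_free_ehf_monomial_def)
  have "b 0 = 0" "c 0 = 0"
    using assms by (auto simp: is_free_ehf_monomial_def)
  show ?thesis
  proof (cases i)
    case 0
    then show ?thesis using \<open>b 0 = 0\<close> \<open>c 0 = 0\<close> le[of 0] by simp
  next
    case (Suc j)
    then show ?thesis using le[of i] le[of j] by simp
  qed
qed

lemma finite_free_ehf_monomials: "finite (free_ehf_monomials k N)"
proof -
  define F where "F = {f :: nat \<Rightarrow> nat. \<forall>i. (i \<in> {..<N} \<longrightarrow> f i \<in> {..k}) \<and> (i \<notin> {..<N} \<longrightarrow> f i = 0)}"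
  have "finite F"
    unfolding F_def by (rule finite_set_of_finite_funs) auto
  moreover have "free_ehf_monomials k N \<subseteq> F \<times> F \<times> F"
    using is_free_ehf_monomial_le by (fastforce simp: free_ehf_monomials_def F_def)
  ultimately show ?thesis
    by (meson finite_SigmaI finite_subset)
qed

definition leading_exponents :: "nat \<Rightarrow> nat \<Rightarrow> nat \<Rightarrow> nat \<Rightarrow> (nat \<times> nat \<times> nat) set" where
  "leading_exponents k l a1 c2 = {(x, y, \<beta>). x \<le> l \<and> y \<le> k - l \<and>
     x + a1 + \<beta> \<le> k \<and> x + \<beta> + y \<le> k \<and> a1 + \<beta> + c2 \<le> k \<and> \<beta> + y + c2 \<le> k}"

lemma finite_leading_exponents: "finite (leading_exponents k l a1 c2)"
proof (rule finite_subset)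
  show "leading_exponents k l a1 c2 \<subseteq> {..k} \<times> {..k} \<times> {..k}"
    by (auto simp: leading_exponents_def)
qed simp

(* The entries b 0 = c 0 = 0 of the tail are unused; after the shift they hold b_1 and c_1. *)
definition ehf_cons :: "ehf_exponents \<times> (nat \<times> nat \<times> nat) \<Rightarrow> ehf_exponents" where
  "ehf_cons = (\<lambda>((a, b, c), (x, y, \<beta>)).
     (case_nat x a, case_nat 0 (b(0 := \<beta>)), case_nat 0 (c(0 := y))))"

definition ehf_uncons :: "ehf_exponents \<Rightarrow> ehf_exponents \<times> (nat \<times> nat \<times> nat)" where
  "ehf_uncons = (\<lambda>(a, b, c). ((a \<circ> Suc, (b \<circ> Suc)(0 := 0), (c \<circ> Suc)(0 := 0)), (a 0, c 1, b 1)))"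

lemma ehf_uncons_cons: "b 0 = 0 \<Longrightarrow> c 0 = 0 \<Longrightarrow> ehf_uncons (ehf_cons ((a, b, c), v)) = ((a, b, c), v)"
  by (cases v) (auto simp: ehf_cons_def ehf_uncons_def fun_eq_iff)

lemma ehf_cons_uncons: "b 0 = 0 \<Longrightarrow> c 0 = 0 \<Longrightarrow> ehf_cons (ehf_uncons (a, b, c)) = (a, b, c)"
  by (auto simp: ehf_cons_def ehf_uncons_def fun_eq_iff split: nat.split)

(* For N = 0 the new entries b_1 and c_1 would be forced to vanish. *)
lemma ehf_cons_mem_ehf_monomials_iff:
  assumes "N \<ge> 1" "b 0 = 0" "c 0 = 0"
  shows "ehf_cons ((a, b, c), (x, y, \<beta>)) \<in> ehf_monomials k l (Suc N) \<longleftrightarrow>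
    (a, b, c) \<in> free_ehf_monomials k N \<and> (x, y, \<beta>) \<in> leading_exponents k l (a 0) (c 1)"
proof -
  have "(\<forall>i\<ge>Suc N. case_nat x a i = 0 \<and> case_nat 0 (b(0 := \<beta>)) i = 0 \<and> case_nat 0 (c(0 := y)) i = 0)
    \<longleftrightarrow> (\<forall>i\<ge>N. a i = 0 \<and> b i = 0 \<and> c i = 0)"
    using assms by (auto simp: all_nat_split[of "\<lambda>i. Suc N \<le> i \<longrightarrow> _ i"])
  then show ?thesis
    using assms
    by (auto simp: ehf_cons_def ehf_monomials_eq_free free_ehf_monomials_def leading_exponents_def
        is_free_ehf_monomial_cons)
qed

lemma bij_betw_ehf_cons:
  assumes "N \<ge> 1"
  shows "bij_betw ehf_cons (SIGMA (a, b, c):free_ehf_monomials k N. leading_exponents k l (a 0) (c 1))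
    (ehf_monomials k l (Suc N))" (is "bij_betw _ ?S _")
proof (rule bij_betw_byWitness[where f' = ehf_uncons])
  show "\<forall>p\<in>?S. ehf_uncons (ehf_cons p) = p"
    by (auto simp: free_ehf_monomials_def is_free_ehf_monomial_def ehf_uncons_cons)
  show "\<forall>q\<in>ehf_monomials k l (Suc N). ehf_cons (ehf_uncons q) = q"
    by (auto simp: ehf_monomials_def is_ehf_monomial_def ehf_cons_uncons)
  show "ehf_cons ` ?S \<subseteq> ehf_monomials k l (Suc N)"
    using assms by (auto simp: ehf_cons_mem_ehf_monomials_iff free_ehf_monomials_def is_free_ehf_monomial_def)
  show "ehf_uncons ` ehf_monomials k l (Suc N) \<subseteq> ?S"
  proof (rule image_subsetI)
    fix q assume q: "q \<in> ehf_monomials k l (Suc N)"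
    obtain a b c where abc: "q = (a, b, c)" by (cases q)
    with q have "b 0 = 0" "c 0 = 0"
      by (auto simp: ehf_monomials_def is_ehf_monomial_def)
    then show "ehf_uncons q \<in> ?S"
      using q assms ehf_cons_mem_ehf_monomials_iff[where a = "a \<circ> Suc" and b = "(b \<circ> Suc)(0 := 0)"
          and c = "(c \<circ> Suc)(0 := 0)" and x = "a 0" and y = "c 1" and \<beta> = "b 1"]
        ehf_cons_uncons[of b c a]
      by (simp add: abc ehf_uncons_def)
  qed
qed

(* Both sets are intervals of length k + 1 - max x c2 - max a1 y. *)
lemma card_b1_range_eq_card_level_range:
  fixes x y a1 c2 k :: nat
  shows "card {\<beta>. x + a1 + \<beta> \<le> k \<and> x + \<beta> + y \<le> k \<and> a1 + \<beta> + c2 \<le> k \<and> \<beta> + y + c2 \<le> k} =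
   card {m. a1 \<le> m \<and> y \<le> m \<and> x + m \<le> k \<and> c2 + m \<le> k}"
proof (cases "max x c2 + max a1 y \<le> k")
  case True
  then have "{\<beta>. x + a1 + \<beta> \<le> k \<and> x + \<beta> + y \<le> k \<and> a1 + \<beta> + c2 \<le> k \<and> \<beta> + y + c2 \<le> k} =
      {..k - (max x c2 + max a1 y)}"
    and "{m. a1 \<le> m \<and> y \<le> m \<and> x + m \<le> k \<and> c2 + m \<le> k} = {max a1 y..k - max x c2}"
    by (auto simp: max_def split: if_splits)
  with True show ?thesis by simp
next
  case False
  then have "{\<beta>. x + a1 + \<beta> \<le> k \<and> x + \<beta> + y \<le> k \<and> a1 + \<beta> + c2 \<le> k \<and> \<beta> + y + c2 \<le> k} = {}"
    and "{m. a1 \<le> m \<and> y \<le> m \<and> x + m \<le> k \<and> c2 + m \<le> k} = {}"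
    by (auto simp: max_def split: if_splits)
  then show ?thesis by (simp only: card.empty)
qed

lemma sum_of_bool_le_atMost: "(\<Sum>x\<le>n. of_bool (x \<le> m) :: nat) = min n m + 1"
  by (induction n) (auto simp: min_def)

lemma card_eq_sum_of_bool_atMost:
  fixes k :: nat
  assumes "\<And>m. P m \<Longrightarrow> m \<le> k"
  shows "card {m. P m} = (\<Sum>m\<le>k. of_bool (P m) :: nat)"
proof -
  have "(\<Sum>m\<le>k. of_bool (P m) :: nat) = card ({..k} \<inter> {m. P m})"
    by simp
  also have "{..k} \<inter> {m. P m} = {m. P m}"
    using assms by auto
  finally show ?thesis ..
qed

definition transfer_entry :: "nat \<Rightarrow> nat \<Rightarrow> nat \<Rightarrow> nat" where
  "transfer_entry k l m = (min (k - l) m + 1) * (min l (k - m) + 1)"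

lemma card_leading_exponents:
  assumes "l \<le> k"
  shows "card (leading_exponents k l a1 c2) =
    (\<Sum>m\<le>k. of_bool (a1 \<le> m \<and> c2 + m \<le> k) * transfer_entry k l m)"
proof -
  let ?B = "\<lambda>x y. {\<beta>. x + a1 + \<beta> \<le> k \<and> x + \<beta> + y \<le> k \<and> a1 + \<beta> + c2 \<le> k \<and> \<beta> + y + c2 \<le> k}"
  let ?P = "\<lambda>x y m. a1 \<le> m \<and> y \<le> m \<and> x + m \<le> k \<and> c2 + m \<le> k"
  have "leading_exponents k l a1 c2 = (SIGMA x:{..l}. SIGMA y:{..k - l}. ?B x y)"
    using assms by (auto simp: leading_exponents_def)
  moreover have "finite (?B x y)" for x y
    by (rule finite_subset[of _ "{..k}"]) auto
  ultimately have "card (leading_exponents k l a1 c2) = (\<Sum>x\<le>l. \<Sum>y\<le>k - l. card (?B x y))"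
    by simp
  also have "\<dots> = (\<Sum>x\<le>l. \<Sum>y\<le>k - l. \<Sum>m\<le>k. of_bool (?P x y m))"
    unfolding card_b1_range_eq_card_level_range
    by (intro sum.cong refl card_eq_sum_of_bool_atMost) simp
  also have "\<dots> = (\<Sum>m\<le>k. \<Sum>x\<le>l. \<Sum>y\<le>k - l. of_bool (?P x y m))"
    by (simp only: sum.swap[where B = "{..k}"])
  also have "\<dots> = (\<Sum>m\<le>k. of_bool (a1 \<le> m \<and> c2 + m \<le> k) * transfer_entry k l m)"
  proof (rule sum.cong)
    fix m assume "m \<in> {..k}"
    then have "of_bool (?P x y m) =
        of_bool (a1 \<le> m \<and> c2 + m \<le> k) * (of_bool (x \<le> k - m) * of_bool (y \<le> m) :: nat)" for x y
      by auto
    then have "(\<Sum>x\<le>l. \<Sum>y\<le>k - l. of_bool (?P x y m) :: nat) =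
        of_bool (a1 \<le> m \<and> c2 + m \<le> k) *
          ((\<Sum>x\<le>l. of_bool (x \<le> k - m)) * (\<Sum>y\<le>k - l. of_bool (y \<le> m)))"
      by (subst sum_product) (simp only: sum_distrib_left)
    then show "(\<Sum>x\<le>l. \<Sum>y\<le>k - l. of_bool (?P x y m)) =
        of_bool (a1 \<le> m \<and> c2 + m \<le> k) * transfer_entry k l m"
      by (simp add: sum_of_bool_le_atMost transfer_entry_def)
  qed simp
  finally show ?thesis .
qed

lemma p_count_eq_sum_free_ehf_monomials:
  assumes "l \<le> k"
  shows "p_count k l N = (\<Sum>(a, b, c)\<in>free_ehf_monomials k N. of_bool (a 0 \<le> l \<and> c 1 + l \<le> k))"
proof -
  have "p_count k l N = card (free_ehf_monomials k N \<inter> {(a, b, c). a 0 \<le> l \<and> c 1 \<le> k - l})"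
    by (simp only: p_count_def ehf_monomials_eq_free)
  also have "\<dots> = (\<Sum>t\<in>free_ehf_monomials k N. of_bool (t \<in> {(a, b, c). a 0 \<le> l \<and> c 1 \<le> k - l}))"
    by (simp add: finite_free_ehf_monomials)
  also have "\<dots> = (\<Sum>(a, b, c)\<in>free_ehf_monomials k N. of_bool (a 0 \<le> l \<and> c 1 + l \<le> k))"
    using assms by (intro sum.cong) auto
  finally show ?thesis .
qed

lemma p_count_Suc:
  assumes "N \<ge> 1" "l \<le> k"
  shows "p_count k l (Suc N) = (\<Sum>m\<le>k. p_count k m N * transfer_entry k l m)"
proof -
  have "p_count k l (Suc N) = (\<Sum>(a, b, c)\<in>free_ehf_monomials k N. card (leading_exponents k l (a 0) (c 1)))"
    using bij_betw_same_card[OF bij_betw_ehf_cons[OF assms(1)]]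
    by (simp add: p_count_def finite_free_ehf_monomials finite_leading_exponents split_beta)
  also have "\<dots> = (\<Sum>(a, b, c)\<in>free_ehf_monomials k N.
      \<Sum>m\<le>k. of_bool (a 0 \<le> m \<and> c 1 + m \<le> k) * transfer_entry k l m)"
    using assms(2) by (simp add: card_leading_exponents split_beta)
  also have "\<dots> = (\<Sum>m\<le>k. (\<Sum>(a, b, c)\<in>free_ehf_monomials k N. of_bool (a 0 \<le> m \<and> c 1 + m \<le> k)) *
      transfer_entry k l m)"
    by (simp only: case_prod_unfold sum_distrib_right) (rule sum.swap)
  also have "\<dots> = (\<Sum>m\<le>k. p_count k m N * transfer_entry k l m)"
    by (simp add: p_count_eq_sum_free_ehf_monomials)
  finally show ?thesis .
qed

lemma p_count_1:
  assumes "l \<le> k"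
  shows "p_count k l 1 = l + 1"
proof -
  define embed :: "nat \<Rightarrow> ehf_exponents" where "embed x = (\<lambda>i. if i = 0 then x else 0, \<lambda>_. 0, \<lambda>_. 0)" for x
  have "ehf_monomials k l 1 = embed ` {..l}"
  proof (intro set_eqI iffI)
    fix t assume "t \<in> ehf_monomials k l 1"
    then show "t \<in> embed ` {..l}"
      by (auto simp: ehf_monomials_def is_ehf_monomial_def embed_def fun_eq_iff image_iff)
        (metis Suc_leI neq0_conv)+
  qed (use assms in \<open>auto simp: ehf_monomials_def is_ehf_monomial_def embed_def\<close>)
  moreover have "inj embed"
    by (rule injI) (drule arg_cong[where f = "\<lambda>t. fst t 0"], simp add: embed_def)
  ultimately show ?thesis
    by (simp add: p_count_def card_image inj_on_subset)
qed

lemma verlinde_mult_apply: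
  "i \<le> k \<Longrightarrow> verlinde_mult k x y i = (\<Sum>m\<le>k. x m * (\<Sum>j\<le>k. y j * verlinde_coeff k m j i))"
  by (simp add: verlinde_mult_def sum_distrib_left mult.assoc)

lemma verlinde_coeff_eq_of_bool:
  "verlinde_coeff k m j l =
     of_bool (m \<le> j + l \<and> j \<le> m + l \<and> l \<le> m + j \<and> l + m + j \<le> 2 * k \<and> even (j + m + l))"
proof -
  have "int j + int m - int l = int (j + m + l) - 2 * int l"
    by simp
  then have "even (int j + int m - int l) \<longleftrightarrow> even (j + m + l)"
    by (simp add: even_of_nat)
  then show ?thesis
    unfolding verlinde_coeff_def by auto
qed

lemma verlinde_coeff_support:
  fixes k l m :: nat
  assumes "l \<le> k" "m \<le> k"
  shows "{j. m \<le> j + l \<and> j \<le> m + l \<and> l \<le> m + j \<and> l + m + j \<le> 2 * k \<and> even (j + m + l)} =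
    (\<lambda>t. (max l m - min l m) + 2 * t) ` {..min (min l m) (k - max l m)}"
proof (intro set_eqI iffI)
  fix j assume "j \<in> {j. m \<le> j + l \<and> j \<le> m + l \<and> l \<le> m + j \<and> l + m + j \<le> 2 * k \<and> even (j + m + l)}"
  then have "m \<le> j + l" "j \<le> m + l" "l \<le> m + j" "l + m + j \<le> 2 * k" "even (j + m + l)"
    by auto
  moreover obtain q where "j + m + l = 2 * q"
    using \<open>even (j + m + l)\<close> by blast
  ultimately have "j = (max l m - min l m) + 2 * (q - max l m)" "q - max l m \<le> min (min l m) (k - max l m)"
    by (auto simp: max_def min_def)
  then show "j \<in> (\<lambda>t. (max l m - min l m) + 2 * t) ` {..min (min l m) (k - max l m)}"
    by blast
next
  fix j assume "j \<in> (\<lambda>t. (max l m - min l m) + 2 * t) ` {..min (min l m) (k - max l m)}"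
  then obtain t where t: "t \<le> min (min l m) (k - max l m)" "j = (max l m - min l m) + 2 * t"
    by auto
  then have "j + m + l = 2 * (max l m + t)"
    by (auto simp: max_def min_def)
  then show "j \<in> {j. m \<le> j + l \<and> j \<le> m + l \<and> l \<le> m + j \<and> l + m + j \<le> 2 * k \<and> even (j + m + l)}"
    using t assms by (auto simp: max_def min_def split: if_splits)
qed

lemma sum_atMost_progression_step_2: "(\<Sum>t\<le>n. int (a + 2 * t) + 1) = int ((n + 1) * (a + n + 1))"
  by (induction n) (auto simp: algebra_simps)

lemma sum_weighted_verlinde_coeff:
  assumes "l \<le> k" "m \<le> k"
  shows "(\<Sum>j\<le>k. (int j + 1) * verlinde_coeff k m j l) = int (transfer_entry k l m)"
proof -
  define a where "a = max l m - min l m"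
  define n where "n = min (min l m) (k - max l m)"
  let ?S = "{j. m \<le> j + l \<and> j \<le> m + l \<and> l \<le> m + j \<and> l + m + j \<le> 2 * k \<and> even (j + m + l)}"
  have "?S \<subseteq> {..k}"
    using assms by auto
  then have "(\<Sum>j\<le>k. (int j + 1) * verlinde_coeff k m j l) = (\<Sum>j\<in>?S. int j + 1)"
    by (simp add: verlinde_coeff_eq_of_bool of_bool_def if_distrib sum.If_cases Int_absorb1 flip: Collect_conj_eq)
  also have "\<dots> = (\<Sum>t\<le>n. int (a + 2 * t) + 1)"
    unfolding verlinde_coeff_support[OF assms] a_def n_def by (subst sum.reindex) (auto simp: inj_on_def)
  also have "\<dots> = int ((n + 1) * (a + n + 1))"
    by (rule sum_atMost_progression_step_2)
  also have "(n + 1) * (a + n + 1) = transfer_entry k l m"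
    using assms unfolding a_def n_def transfer_entry_def by (auto simp: max_def min_def mult.commute)
  finally show ?thesis .
qed

lemma d_coeff_Suc:
  assumes "l \<le> k"
  shows "d_coeff (Suc N) k l = (\<Sum>m\<le>k. d_coeff N k m * int (transfer_entry k l m))"
proof -
  have "d_coeff (Suc N) k l = (\<Sum>m\<le>k. d_coeff N k m * (\<Sum>j\<le>k. verlinde_X k j * verlinde_coeff k m j l))"
    using assms by (simp add: d_coeff_def verlinde_mult_apply)
  also have "\<dots> = (\<Sum>m\<le>k. d_coeff N k m * (\<Sum>j\<le>k. (int j + 1) * verlinde_coeff k m j l))"
    by (simp add: verlinde_X_def)
  also have "\<dots> = (\<Sum>m\<le>k. d_coeff N k m * int (transfer_entry k l m))"
    using assms by (simp add: sum_weighted_verlinde_coeff)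
  finally show ?thesis .
qed

lemma d_coeff_1:
  assumes "l \<le> k"
  shows "d_coeff 1 k l = int l + 1"
proof -
  have "(\<Sum>m\<le>k. d_coeff 0 k m * int (transfer_entry k l m)) =
      (\<Sum>m\<le>k. if m = 0 then int (transfer_entry k l m) else 0)"
    by (intro sum.cong) (simp_all add: d_coeff_def verlinde_basis_def)
  then show ?thesis
    using d_coeff_Suc[OF assms, of 0] assms by (simp add: transfer_entry_def)
qed

theorem proposition3p2p3:
  fixes k l N :: nat
  assumes "k > 0" and "l \<le> k" and "N \<ge> 1"
  shows "int (p_count k l N) = d_coeff N k l"
  using assms(3,2)
proof (induction N arbitrary: l rule: nat_induct_at_least)
  case base
  then show ?case
    using p_count_1[of l k] d_coeff_1[of l k] by simp
next
  case (Suc N)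
  have "int (p_count k l (Suc N)) = (\<Sum>m\<le>k. int (p_count k m N) * int (transfer_entry k l m))"
    using Suc.hyps Suc.prems by (simp add: p_count_Suc)
  also have "\<dots> = (\<Sum>m\<le>k. d_coeff N k m * int (transfer_entry k l m))"
    by (intro sum.cong) (simp_all add: Suc.IH)
  also have "\<dots> = d_coeff (Suc N) k l"
    using Suc.prems by (simp add: d_coeff_Suc)
  finally show ?case .
qed

end
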